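(* For every $k\geq 0$, the polynomial $H_k(x)$ is symmetric: for all integers $m$, the coefficient of $x^m$ in $H_k(x)$ equals the coefficient of $x^{2(k+1)(k+2)-1-m}$. Equivalently, writing $h_k(i,j)$ for the coefficient of $x^{2(k+1)i+j}$, one has $h_k(i,j)=h_k(k+1-i,\,2k+1-j)$ for $0\le i\le k+1$, $0\le j\le 2k+1$.
   Context: $B_n(y)=\sum_{\pi\in B_n}y^{\mathrm{des}_B(\pi)}$ is the type $B$ Eulerian polynomial: $B_n$ is the set of signed permutations $\pi_1\cdots\pi_n$ of $[n]$, and with $\pi_0=0$, $\mathrm{des}_B(\pi)$ counts $i\in\{0,\dots,n-1\}$ with $\pi_i>\pi_{i+1}$; $B_0=1$. Define \[H_k(x)=\sum_{l=0}^{k}B_{k-l}(x^{2k+2})(x^{2k+2}-1)^l\sum_{s=l}^{k}\binom{s}{l}x^{2k+1-s}+\sum_{l=0}^{k}B_{k-l}(x^{-2k-2})(x^{-2k-2}-1)^l\sum_{s=l}^{k}\binom{s}{l}x^{2(k+1)^2+s}.\] *)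

theory Defs
  imports Complex_Main "HOL-Computational_Algebra.Formal_Laurent_Series"
begin

definition signed_perms :: "nat \<Rightarrow> int list set" where
  "signed_perms n = {\<pi>. length \<pi> = n \<and> distinct (map abs \<pi>) \<and> set (map abs \<pi>) = {1..int n}}"

definition desB :: "int list \<Rightarrow> nat" where
  "desB \<pi> = card {i. i < length \<pi> \<and> (0 # \<pi>) ! i > (0 # \<pi>) ! Suc i}"

definition eulerB :: "nat \<Rightarrow> 'a::comm_ring_1 \<Rightarrow> 'a" where
  "eulerB n y = (\<Sum>\<pi>\<in>signed_perms n. y ^ desB \<pi>)"

definition H :: "nat \<Rightarrow> int fls" where
  "H k =
    (\<Sum>l=0..k. eulerB (k - l) (fls_X ^ (2*k+2)) * (fls_X ^ (2*k+2) - 1) ^ l *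
        (\<Sum>s=l..k. of_nat (s choose l) * fls_X ^ (2*k+1-s)))
  + (\<Sum>l=0..k. eulerB (k - l) (fls_X_inv ^ (2*k+2)) * (fls_X_inv ^ (2*k+2) - 1) ^ l *
        (\<Sum>s=l..k. of_nat (s choose l) * fls_X ^ (2*(k+1)^2+s)))"

end

theory Submission
  imports Defs
begin

text \<open>
  The first sum in \<open>H k\<close> is \<open>F(x)\<close> for an integer polynomial \<open>F\<close>, and since
  \<open>x^D \<cdot> x^-(2k+1-s) = x^(2(k+1)^2+s)\<close> with \<open>D = 2(k+1)(k+2) - 1\<close>, the second sum is the
  reciprocal \<open>x^D F(1/x)\<close>. So the coefficient of \<open>x^m\<close> in \<open>H k\<close> is \<open>F\<^sub>m + F\<^sub>D\<^sub>-\<^sub>m\<close>,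
  which is invariant under \<open>m \<mapsto> D - m\<close>.
\<close>

definition ipoly :: "int poly \<Rightarrow> 'a::comm_ring_1 \<Rightarrow> 'a" where
  "ipoly p x = poly (map_poly of_int p) x"

lemma map_poly_of_int_add:
  "map_poly of_int (p + q) = map_poly of_int p + (map_poly of_int q :: 'a::comm_ring_1 poly)"
  by (rule poly_eqI) (simp add: coeff_map_poly)

lemma map_poly_of_int_diff:
  "map_poly of_int (p - q) = map_poly of_int p - (map_poly of_int q :: 'a::comm_ring_1 poly)"
  by (rule poly_eqI) (simp add: coeff_map_poly)

lemma map_poly_of_int_mult:
  "map_poly of_int (p * q) = map_poly of_int p * (map_poly of_int q :: 'a::comm_ring_1 poly)"
  by (rule poly_eqI) (simp add: coeff_map_poly coeff_mult)

lemma ipoly_add: "ipoly (p + q) x = ipoly p x + ipoly q x"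
  by (simp add: ipoly_def map_poly_of_int_add)

lemma ipoly_diff: "ipoly (p - q) x = ipoly p x - ipoly q x"
  by (simp add: ipoly_def map_poly_of_int_diff)

lemma ipoly_mult: "ipoly (p * q) x = ipoly p x * ipoly q x"
  by (simp add: ipoly_def map_poly_of_int_mult)

lemma ipoly_0: "ipoly 0 x = 0"
  by (simp add: ipoly_def)

lemma ipoly_1: "ipoly 1 x = 1"
  by (simp add: ipoly_def)

lemma ipoly_X: "ipoly [:0, 1:] x = x"
  by (simp add: ipoly_def map_poly_pCons)

lemma ipoly_pCons: "ipoly (pCons a p) x = of_int a + x * ipoly p x"
  by (simp add: ipoly_def map_poly_pCons)

lemma ipoly_of_nat: "ipoly (of_nat n) x = of_nat n"
  by (simp add: ipoly_def of_nat_poly map_poly_pCons)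

lemma ipoly_power: "ipoly (p ^ n) x = ipoly p x ^ n"
  by (induction n) (simp_all add: ipoly_1 ipoly_mult)

lemma ipoly_sum: "ipoly (\<Sum>i\<in>A. f i) x = (\<Sum>i\<in>A. ipoly (f i) x)"
  by (induction A rule: infinite_finite_induct) (simp_all add: ipoly_0 ipoly_add)

lemma eulerB_ipoly: "eulerB n (ipoly p x) = ipoly (eulerB n p) x"
  by (simp add: eulerB_def ipoly_sum ipoly_power)

lemma fls_nth_ipoly_X_inv:
  "fls_nth (ipoly p (fls_X_inv :: 'a::comm_ring_1 fls)) m = fls_nth (ipoly p fls_X) (- m)"
proof (induction p arbitrary: m rule: pCons_induct)
  case (pCons a p)
  have "fls_nth (ipoly (pCons a p) (fls_X_inv :: 'a fls)) m = (if m = 0 then of_int a else 0) + fls_nth (ipoly p fls_X_inv) (m + 1)"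
    by (simp add: ipoly_pCons fls_X_inv_times_conv_shift fls_of_int_nth)
  also have "\<dots> = (if m = 0 then of_int a else 0) + fls_nth (ipoly p fls_X) (- (m + 1))"
    by (simp only: pCons.IH)
  also have "\<dots> = fls_nth (ipoly (pCons a p) fls_X) (- m)"
    by (simp add: ipoly_pCons fls_X_times_conv_shift fls_of_int_nth)
  finally show ?case .
qed (simp add: ipoly_0)

lemma fls_nth_X_power_times_ipoly_X_inv:
  "fls_nth (fls_X ^ D * ipoly p fls_X_inv) m = fls_nth (ipoly p fls_X) (int D - m)"
  by (simp add: fls_X_power_times_conv_shift fls_nth_ipoly_X_inv)

lemma fls_nth_ipoly_self_reciprocal:
  fixes f :: "'a::comm_ring_1 fls"
  assumes "f = ipoly p fls_X + fls_X ^ D * ipoly p fls_X_inv"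
  shows "fls_nth f m = fls_nth f (int D - m)"
  by (simp add: assms fls_nth_X_power_times_ipoly_X_inv)

lemma fls_X_power_times_X_inv_power:
  "b \<le> a \<Longrightarrow> fls_X ^ a * fls_X_inv ^ b = (fls_X ^ (a - b) :: 'a::comm_ring_1 fls)"
  by (rule fls_eqI) (simp add: fls_X_power_times_conv_shift)

definition H_half :: "nat \<Rightarrow> int poly" where
  "H_half k = (\<Sum>l=0..k. eulerB (k - l) ([:0, 1:] ^ (2*k+2)) * ([:0, 1:] ^ (2*k+2) - 1) ^ l *
      (\<Sum>s=l..k. of_nat (s choose l) * [:0, 1:] ^ (2*k+1-s)))"

lemma ipoly_H_half:
  "ipoly (H_half k) x = (\<Sum>l=0..k. eulerB (k - l) (x ^ (2*k+2)) * (x ^ (2*k+2) - 1) ^ l *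
      (\<Sum>s=l..k. of_nat (s choose l) * x ^ (2*k+1-s)))"
  unfolding H_half_def
  by (simp only: ipoly_sum ipoly_mult ipoly_power ipoly_diff ipoly_1 ipoly_X ipoly_of_nat
      eulerB_ipoly[symmetric])

lemma H_eq_ipoly_H_half:
  "H k = ipoly (H_half k) fls_X + fls_X ^ (2*(k+1)*(k+2) - 1) * ipoly (H_half k) fls_X_inv"
proof -
  let ?D = "2*(k+1)*(k+2) - 1"
  have "fls_X ^ ?D * ipoly (H_half k) (fls_X_inv :: int fls) =
      (\<Sum>l=0..k. eulerB (k - l) (fls_X_inv ^ (2*k+2)) * (fls_X_inv ^ (2*k+2) - 1) ^ l *
        (\<Sum>s=l..k. of_nat (s choose l) * (fls_X ^ ?D * fls_X_inv ^ (2*k+1-s))))"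
    by (simp add: ipoly_H_half sum_distrib_left mult_ac)
  also have "\<dots> = (\<Sum>l=0..k. eulerB (k - l) (fls_X_inv ^ (2*k+2)) * (fls_X_inv ^ (2*k+2) - 1) ^ l *
        (\<Sum>s=l..k. of_nat (s choose l) * fls_X ^ (2*(k+1)^2+s)))"
  proof (intro sum.cong refl arg_cong2[where f = "(*)"])
    fix l s
    assume "s \<in> {l..k}"
    then have "?D - (2*k+1-s) = 2*(k+1)^2+s" and "2*k+1-s \<le> ?D"
      by (auto simp: algebra_simps power2_eq_square)
    then show "fls_X ^ ?D * fls_X_inv ^ (2*k+1-s) = (fls_X ^ (2*(k+1)^2+s) :: int fls)"
      by (simp only: fls_X_power_times_X_inv_power)
  qed
  finally show ?thesis
    by (simp add: H_def ipoly_H_half)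
qed

theorem corollary3p3:
  fixes k :: nat
  shows "(\<forall>m::int. fls_nth (H k) m = fls_nth (H k) (2 * (int k + 1) * (int k + 2) - 1 - m)) \<and>
         (\<forall>i j::int. 0 \<le> i \<and> i \<le> int k + 1 \<and> 0 \<le> j \<and> j \<le> 2 * int k + 1 \<longrightarrow>
            fls_nth (H k) (2 * (int k + 1) * i + j) =
            fls_nth (H k) (2 * (int k + 1) * (int k + 1 - i) + (2 * int k + 1 - j)))"
proof -
  have D: "int (2*(k+1)*(k+2) - 1) = 2 * (int k + 1) * (int k + 2) - 1"
    by (simp add: algebra_simps)
  have symmetric: "fls_nth (H k) m = fls_nth (H k) (2 * (int k + 1) * (int k + 2) - 1 - m)" for m
    using fls_nth_ipoly_self_reciprocal[OF H_eq_ipoly_H_half, where m = m] by (simp only: D)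
  have reflected_index: "2 * (int k + 1) * (int k + 1 - i) + (2 * int k + 1 - j) =
      2 * (int k + 1) * (int k + 2) - 1 - (2 * (int k + 1) * i + j)" for i j
    by (simp add: algebra_simps)
  show ?thesis
    unfolding reflected_index using symmetric by blast
qed

end
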